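(* Let $n\ge2$ be even. The permutation representation of $S_n$ over $\mathbb{C}$ arising from the action of $S_n$ (by $\pi\cdot S=\pi(S)$) on the set of even-sized subsets of $\{1,\dots,n\}$ unites conjugacy classes; specifically, $\sigma=(1,2)(3,4)\cdots(n-1,n)$ and $\tau=(1)(2)(3,4)\cdots(n-1,n)$ are not conjugate in $S_n$ but have similar images.
   Context: A representation $T$ of $G$ unites conjugacy classes if there are non-conjugate $\sigma,\tau\in G$ with $T(\sigma),T(\tau)$ similar matrices. *)

theory Defs
  imports Complex_Main "HOL-Combinatorics.Permutations"
begin

text \<open>Square matrices over the complex numbers indexed by a finite set I,
  represented as functions I => I => complex (only values on I matter).\<close>

definition mat_mult :: "'i set \<Rightarrow> ('i \<Rightarrow> 'i \<Rightarrow> complex) \<Rightarrow> ('i \<Rightarrow> 'i \<Rightarrow> complex) \<Rightarrow> ('i \<Rightarrow> 'i \<Rightarrow> complex)" where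
  "mat_mult I A B = (\<lambda>i k. \<Sum>j\<in>I. A i j * B j k)"

definition mat_id :: "'i \<Rightarrow> 'i \<Rightarrow> complex" where
  "mat_id = (\<lambda>i j. if i = j then 1 else 0)"

definition mat_eq_on :: "'i set \<Rightarrow> ('i \<Rightarrow> 'i \<Rightarrow> complex) \<Rightarrow> ('i \<Rightarrow> 'i \<Rightarrow> complex) \<Rightarrow> bool" where
  "mat_eq_on I A B \<longleftrightarrow> (\<forall>i\<in>I. \<forall>j\<in>I. A i j = B i j)"

definition similar_on :: "'i set \<Rightarrow> ('i \<Rightarrow> 'i \<Rightarrow> complex) \<Rightarrow> ('i \<Rightarrow> 'i \<Rightarrow> complex) \<Rightarrow> bool" where
  "similar_on I A B \<longleftrightarrow> (\<exists>P Q. mat_eq_on I (mat_mult I P Q) mat_id \<and> mat_eq_on I (mat_mult I Q P) mat_id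
      \<and> mat_eq_on I (mat_mult I (mat_mult I P A) Q) B)"

definition conj_Sn :: "nat \<Rightarrow> (nat \<Rightarrow> nat) \<Rightarrow> (nat \<Rightarrow> nat) \<Rightarrow> bool" where
  "conj_Sn n \<sigma> \<tau> \<longleftrightarrow> (\<exists>g. g permutes {1..n} \<and> \<tau> = g \<circ> \<sigma> \<circ> inv g)"

definition even_subsets :: "nat \<Rightarrow> nat set set" where
  "even_subsets n = {S. S \<subseteq> {1..n} \<and> even (card S)}"

definition even_subset_rep :: "(nat \<Rightarrow> nat) \<Rightarrow> nat set \<Rightarrow> nat set \<Rightarrow> complex" where
  "even_subset_rep \<pi> = (\<lambda>S T. if \<pi> ` T = S then 1 else 0)"

definition unites_conjugacy_classes_even_subsets :: "nat \<Rightarrow> bool" where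
  "unites_conjugacy_classes_even_subsets n \<longleftrightarrow>
     (\<exists>\<sigma> \<tau>. \<sigma> permutes {1..n} \<and> \<tau> permutes {1..n} \<and> \<not> conj_Sn n \<sigma> \<tau> \<and>
        similar_on (even_subsets n) (even_subset_rep \<sigma>) (even_subset_rep \<tau>))"

text \<open>\<sigma> = (1,2)(3,4)...(n-1,n) and \<tau> = (1)(2)(3,4)...(n-1,n).\<close>
definition sigma_pairs :: "nat \<Rightarrow> nat \<Rightarrow> nat" where
  "sigma_pairs n i = (if 1 \<le> i \<and> i \<le> n then (if odd i then i + 1 else i - 1) else i)"

definition tau_pairs :: "nat \<Rightarrow> nat \<Rightarrow> nat" where
  "tau_pairs n i = (if 3 \<le> i \<and> i \<le> n then (if odd i then i + 1 else i - 1) else i)"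

end

theory Submission
  imports Defs
begin

(* Write s for the transposition (1 2), so that sigma = s tau with s and tau commuting.
  On subsets put Phi(S) = s^k S with k = |S \<inter> O|, where O = {3, 5, 7, ...}; Phi is an involution
  of the even subsets.  Since tau exchanges O and E = {4, 6, ...}, one gets Phi(sigma S) = tau Phi(S):
  the only delicate case is |S \<inter> O| = |S \<inter> E| mod 2, where |S| even forces |S \<inter> {1,2}| even,
  so s fixes S.  Hence the permutation matrix of Phi conjugates the matrix of sigma into that of tau.
  They are not conjugate in S_n, as tau fixes 1 while sigma has no fixed point. *)

definition map_matrix :: "('i \<Rightarrow> 'i) \<Rightarrow> 'i \<Rightarrow> 'i \<Rightarrow> complex" where
  "map_matrix h = (\<lambda>i j. if h j = i then 1 else 0)"

lemma mat_eq_on_refl: "mat_eq_on X A A"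
  by (simp add: mat_eq_on_def)

lemma mat_eq_on_trans [trans]: "mat_eq_on X A B \<Longrightarrow> mat_eq_on X B C \<Longrightarrow> mat_eq_on X A C"
  by (simp add: mat_eq_on_def)

lemma mat_mult_cong:
  assumes "mat_eq_on X A A'" "mat_eq_on X B B'"
  shows "mat_eq_on X (mat_mult X A B) (mat_mult X A' B')"
  using assms unfolding mat_eq_on_def mat_mult_def by (auto intro: sum.cong)

lemma map_matrix_cong:
  assumes "\<And>x. x \<in> X \<Longrightarrow> h x = h' x"
  shows "mat_eq_on X (map_matrix h) (map_matrix h')"
  using assms by (simp add: mat_eq_on_def map_matrix_def)

lemma map_matrix_id: "map_matrix id = mat_id"
  by (auto simp: map_matrix_def mat_id_def fun_eq_iff)

lemma mat_mult_map_matrix: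
  assumes "finite X" "h2 ` X \<subseteq> X"
  shows "mat_eq_on X (mat_mult X (map_matrix h1) (map_matrix h2)) (map_matrix (h1 \<circ> h2))"
  unfolding mat_eq_on_def
proof (intro ballI)
  fix i k assume "k \<in> X"
  have "mat_mult X (map_matrix h1) (map_matrix h2) i k
        = (\<Sum>j\<in>X. if j = h2 k then map_matrix h1 i j else 0)"
    unfolding mat_mult_def map_matrix_def by (rule sum.cong) auto
  also have "\<dots> = map_matrix (h1 \<circ> h2) i k"
    using assms \<open>k \<in> X\<close> by (auto simp: map_matrix_def)
  finally show "mat_mult X (map_matrix h1) (map_matrix h2) i k = map_matrix (h1 \<circ> h2) i k" .
qed

lemma similar_on_map_matrix_conj:
  assumes X: "finite X" and \<phi>: "bij_betw \<phi> X X" and f: "f ` X \<subseteq> X"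
    and intertwines: "\<And>x. x \<in> X \<Longrightarrow> \<phi> (f x) = g (\<phi> x)"
  shows "similar_on X (map_matrix f) (map_matrix g)"
proof -
  define \<psi> where "\<psi> = inv_into X \<phi>"
  have \<psi>: "bij_betw \<psi> X X"
    unfolding \<psi>_def using \<phi> by (rule bij_betw_inv_into)
  have \<phi>\<psi>: "\<phi> (\<psi> x) = x" and \<psi>\<phi>: "\<psi> (\<phi> x) = x" if "x \<in> X" for x
    unfolding \<psi>_def using \<phi> that by (auto simp: bij_betw_inv_into_right bij_betw_inv_into_left)
  have \<phi>X: "\<phi> ` X \<subseteq> X" and \<psi>X: "\<psi> ` X \<subseteq> X"
    using \<phi> \<psi> by (auto simp: bij_betw_def)
  have "mat_eq_on X (mat_mult X (map_matrix \<phi>) (map_matrix \<psi>)) (map_matrix (\<phi> \<circ> \<psi>))"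
    using X \<psi>X by (rule mat_mult_map_matrix)
  also have "mat_eq_on X \<dots> mat_id"
    using map_matrix_cong[of X "\<phi> \<circ> \<psi>" id] \<phi>\<psi> by (simp add: map_matrix_id)
  finally have PQ: "mat_eq_on X (mat_mult X (map_matrix \<phi>) (map_matrix \<psi>)) mat_id" .
  have "mat_eq_on X (mat_mult X (map_matrix \<psi>) (map_matrix \<phi>)) (map_matrix (\<psi> \<circ> \<phi>))"
    using X \<phi>X by (rule mat_mult_map_matrix)
  also have "mat_eq_on X \<dots> mat_id"
    using map_matrix_cong[of X "\<psi> \<circ> \<phi>" id] \<psi>\<phi> by (simp add: map_matrix_id)
  finally have QP: "mat_eq_on X (mat_mult X (map_matrix \<psi>) (map_matrix \<phi>)) mat_id" .
  have "mat_eq_on X (mat_mult X (mat_mult X (map_matrix \<phi>) (map_matrix f)) (map_matrix \<psi>))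
      (mat_mult X (map_matrix (\<phi> \<circ> f)) (map_matrix \<psi>))"
    using mat_mult_map_matrix[OF X f] mat_eq_on_refl by (rule mat_mult_cong)
  also have "mat_eq_on X \<dots> (map_matrix (\<phi> \<circ> f \<circ> \<psi>))"
    using X \<psi>X by (rule mat_mult_map_matrix)
  also have "mat_eq_on X \<dots> (map_matrix g)"
    using \<psi>X by (intro map_matrix_cong) (auto simp: intertwines \<phi>\<psi>)
  finally show ?thesis
    unfolding similar_on_def using PQ QP by blast
qed

lemma involution_permutes:
  assumes "\<And>x. f (f x) = x" "\<And>x. x \<notin> A \<Longrightarrow> f x = x"
  shows "f permutes A"
  unfolding permutes_def using assms by metis

lemma conj_Sn_fixed_point:
  assumes "conj_Sn n \<sigma> \<tau>" "\<tau> x = x" "x \<in> {1..n}"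
  shows "\<exists>y\<in>{1..n}. \<sigma> y = y"
proof -
  obtain g where g: "g permutes {1..n}" and \<tau>: "\<tau> = g \<circ> \<sigma> \<circ> inv g"
    using assms(1) unfolding conj_Sn_def by blast
  have "inv g x \<in> {1..n}"
    using permutes_in_image[OF permutes_inv[OF g]] assms(3) by simp
  moreover have "g (\<sigma> (inv g x)) = x"
    using assms(2) \<tau> by simp
  then have "\<sigma> (inv g x) = inv g x"
    using permutes_inv_eq[OF g] by metis
  ultimately show ?thesis by blast
qed

lemma permutes_image_even_subsets:
  assumes "\<pi> permutes {1..n}" "S \<in> even_subsets n"
  shows "\<pi> ` S \<in> even_subsets n"
  using assms permutes_image[OF assms(1)] permutes_inj[OF assms(1)]
  by (auto simp: even_subsets_def card_image inj_on_subset)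

lemma finite_even_subsets: "finite (even_subsets n)"
  unfolding even_subsets_def by (rule finite_subset[of _ "Pow {1..n}"]) auto

lemma sigma_pairs_involutory: "even n \<Longrightarrow> sigma_pairs n (sigma_pairs n i) = i"
  unfolding sigma_pairs_def by (auto; presburger)

lemma tau_pairs_involutory: "even n \<Longrightarrow> tau_pairs n (tau_pairs n i) = i"
  unfolding tau_pairs_def by (auto; presburger)

lemma sigma_pairs_permutes: "even n \<Longrightarrow> sigma_pairs n permutes {1..n}"
  by (rule involution_permutes[OF sigma_pairs_involutory]) (auto simp: sigma_pairs_def)

lemma tau_pairs_permutes: "even n \<Longrightarrow> tau_pairs n permutes {1..n}"
  by (rule involution_permutes[OF tau_pairs_involutory]) (auto simp: tau_pairs_def)

lemma sigma_pairs_no_fixed_point: "x \<in> {1..n} \<Longrightarrow> sigma_pairs n x \<noteq> x"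
  unfolding sigma_pairs_def by auto

lemma not_conj_Sn_sigma_tau_pairs:
  assumes "n \<ge> 2"
  shows "\<not> conj_Sn n (sigma_pairs n) (tau_pairs n)"
proof
  assume "conj_Sn n (sigma_pairs n) (tau_pairs n)"
  moreover have "tau_pairs n 1 = 1" "1 \<in> {1..n}"
    using assms by (auto simp: tau_pairs_def)
  ultimately show False
    using conj_Sn_fixed_point sigma_pairs_no_fixed_point by metis
qed

lemma sigma_pairs_eq: "2 \<le> n \<Longrightarrow> sigma_pairs n = transpose 1 2 \<circ> tau_pairs n"
  unfolding sigma_pairs_def tau_pairs_def transpose_def fun_eq_iff by (auto; presburger)

lemma transpose_12_tau_pairs_commute: "transpose 1 2 \<circ> tau_pairs n = tau_pairs n \<circ> transpose 1 2"
  unfolding tau_pairs_def transpose_def fun_eq_iff by (auto; presburger)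

definition odd_ge_3 :: "nat set" where
  "odd_ge_3 = {i. odd i \<and> 3 \<le> i}"

definition even_ge_3 :: "nat set" where
  "even_ge_3 = {i. even i \<and> 3 \<le> i}"

definition swap_12_by_parity :: "nat set \<Rightarrow> nat set" where
  "swap_12_by_parity S = (if odd (card (S \<inter> odd_ge_3)) then transpose 1 2 ` S else S)"

lemma transpose_image_Int_eq:
  assumes "a \<notin> A" "b \<notin> A"
  shows "transpose a b ` S \<inter> A = S \<inter> A"
  using assms by (auto simp: in_transpose_image_iff transpose_def)

lemma swap_12_by_parity_involutory: "swap_12_by_parity (swap_12_by_parity S) = S"
  by (simp add: swap_12_by_parity_def transpose_image_Int_eq odd_ge_3_def image_comp)

lemma bij_betw_swap_12_by_parity:
  assumes "2 \<le> n"
  shows "bij_betw swap_12_by_parity (even_subsets n) (even_subsets n)"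
proof -
  have "transpose 1 2 permutes {1..n}"
    using assms by (intro permutes_swap_id) auto
  then have "swap_12_by_parity ` even_subsets n \<subseteq> even_subsets n"
    by (auto simp: swap_12_by_parity_def permutes_image_even_subsets)
  then show ?thesis
    by (intro bij_betw_byWitness[where f' = swap_12_by_parity])
      (simp_all add: swap_12_by_parity_involutory)
qed

lemma card_tau_pairs_image_Int_odd_ge_3:
  assumes "even n" "S \<subseteq> {1..n}"
  shows "card (tau_pairs n ` S \<inter> odd_ge_3) = card (S \<inter> even_ge_3)"
proof -
  have "i \<in> {1..n} \<Longrightarrow> tau_pairs n i \<in> odd_ge_3 \<longleftrightarrow> i \<in> even_ge_3" for i
    using assms(1) unfolding tau_pairs_def odd_ge_3_def even_ge_3_def by (auto; presburger)
  then have "tau_pairs n ` S \<inter> odd_ge_3 = tau_pairs n ` (S \<inter> even_ge_3)"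
    using assms(2) by blast
  then show ?thesis
    using permutes_inj_on[OF tau_pairs_permutes[OF assms(1)]] by (simp add: card_image)
qed

lemma card_split_pairs:
  assumes "S \<subseteq> {1..n}"
  shows "card S = card (S \<inter> {1,2}) + card (S \<inter> odd_ge_3) + card (S \<inter> even_ge_3)"
proof -
  have fin: "finite S"
    using assms finite_subset by blast
  have "S = (S \<inter> {1,2}) \<union> (S \<inter> odd_ge_3) \<union> (S \<inter> even_ge_3)"
    using assms unfolding odd_ge_3_def even_ge_3_def by auto
  then have "card S = card ((S \<inter> {1,2}) \<union> (S \<inter> odd_ge_3) \<union> (S \<inter> even_ge_3))"
    by simp
  also have "\<dots> = card ((S \<inter> {1,2}) \<union> (S \<inter> odd_ge_3)) + card (S \<inter> even_ge_3)"
    by (rule card_Un_disjoint) (use fin in \<open>auto simp: odd_ge_3_def even_ge_3_def\<close>)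
  also have "card ((S \<inter> {1,2}) \<union> (S \<inter> odd_ge_3)) = card (S \<inter> {1,2}) + card (S \<inter> odd_ge_3)"
    by (rule card_Un_disjoint) (use fin in \<open>auto simp: odd_ge_3_def\<close>)
  finally show ?thesis .
qed

lemma transpose_image_eq_if_even_card:
  assumes "even (card (S \<inter> {a, b}))"
  shows "transpose a b ` S = S"
proof (rule transpose_image_eq)
  show "a \<in> S \<longleftrightarrow> b \<in> S"
    using assms by (cases "a \<in> S"; cases "b \<in> S") (auto simp: Int_insert_right)
qed

lemma swap_12_by_parity_intertwines:
  assumes "2 \<le> n" "even n" "S \<in> even_subsets n"
  shows "swap_12_by_parity (sigma_pairs n ` S) = tau_pairs n ` swap_12_by_parity S"
proof -
  let ?s = "(`) (transpose (1::nat) 2)" and ?t = "(`) (tau_pairs n)"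
  have S: "S \<subseteq> {1..n}" "even (card S)"
    using assms(3) by (auto simp: even_subsets_def)
  have sigma: "sigma_pairs n ` S = ?s (?t S)"
    by (simp add: sigma_pairs_eq[OF assms(1)] image_comp)
  have commute: "?t (?s S) = ?s (?t S)"
    by (simp only: image_comp transpose_12_tau_pairs_commute)
  have parity: "card (sigma_pairs n ` S \<inter> odd_ge_3) = card (S \<inter> even_ge_3)"
    using card_tau_pairs_image_Int_odd_ge_3[OF assms(2) S(1)]
    by (simp add: sigma transpose_image_Int_eq odd_ge_3_def)
  consider (same) "odd (card (S \<inter> odd_ge_3)) = odd (card (S \<inter> even_ge_3))"
    | (differ) "odd (card (S \<inter> odd_ge_3)) \<noteq> odd (card (S \<inter> even_ge_3))"
    by blast
  then show ?thesis
  proof cases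
    case same
    then have "even (card (S \<inter> {1, 2}))"
      using card_split_pairs[OF S(1)] S(2) by presburger
    then have "?s S = S"
      by (rule transpose_image_eq_if_even_card)
    then have "?s (?t S) = ?t S"
      using commute by simp
    then show ?thesis
      using \<open>?s S = S\<close> parity sigma by (simp add: swap_12_by_parity_def image_comp)
  next
    case differ
    then show ?thesis
      using parity sigma commute by (auto simp: swap_12_by_parity_def image_comp)
  qed
qed

lemma even_subset_rep_eq_map_matrix: "even_subset_rep \<pi> = map_matrix ((`) \<pi>)"
  by (simp add: even_subset_rep_def map_matrix_def)

lemma similar_on_even_subset_rep_sigma_tau_pairs:
  assumes "2 \<le> n" "even n"
  shows "similar_on (even_subsets n) (even_subset_rep (sigma_pairs n)) (even_subset_rep (tau_pairs n))"
  unfolding even_subset_rep_eq_map_matrix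
proof (rule similar_on_map_matrix_conj[OF finite_even_subsets bij_betw_swap_12_by_parity[OF assms(1)]])
  show "(`) (sigma_pairs n) ` even_subsets n \<subseteq> even_subsets n"
    using permutes_image_even_subsets[OF sigma_pairs_permutes[OF assms(2)]] by blast
qed (rule swap_12_by_parity_intertwines[OF assms])

theorem mainTheorem15:
  fixes n :: nat
  assumes "n \<ge> 2" and "even n"
  shows "unites_conjugacy_classes_even_subsets n \<and>
         sigma_pairs n permutes {1..n} \<and> tau_pairs n permutes {1..n} \<and>
         \<not> conj_Sn n (sigma_pairs n) (tau_pairs n) \<and>
         similar_on (even_subsets n) (even_subset_rep (sigma_pairs n)) (even_subset_rep (tau_pairs n))"
proof -
  have "sigma_pairs n permutes {1..n}" "tau_pairs n permutes {1..n}"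
    using assms(2) by (rule sigma_pairs_permutes, rule tau_pairs_permutes)
  moreover have "\<not> conj_Sn n (sigma_pairs n) (tau_pairs n)"
    using assms(1) by (rule not_conj_Sn_sigma_tau_pairs)
  moreover have "similar_on (even_subsets n) (even_subset_rep (sigma_pairs n)) (even_subset_rep (tau_pairs n))"
    using assms by (rule similar_on_even_subset_rep_sigma_tau_pairs)
  ultimately show ?thesis
    unfolding unites_conjugacy_classes_even_subsets_def by blast
qed

end
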